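(* Let $(\Omega,\mathcal{A},\mathbb{P})$ be a probability space and let $\mathcal{X}:\Omega\to\mathcal{F}_c(\mathbb{R})$ be a fuzzy random variable (no integrability assumption). Then for every support median $A\in\mathrm{Med}_s(\mathcal{X})$ and every $\alpha\in[0,1]$ we have $A_\alpha\subseteq(\mathrm{med}_{Gr}(\mathcal{X}))_\alpha$.
   Context: For a function $A:\mathbb{R}\to[0,1]$, its $\alpha$-levels are $A_\alpha=\{x: A(x)\ge\alpha\}$ for $\alpha\in(0,1]$ and $A_0$ is the closure of $\{x:A(x)>0\}$. $\mathcal{F}_c(\mathbb{R})$ is the set of such $A$ all of whose $\alpha$-levels are non-empty compact intervals. The support function of $A\in\mathcal{F}_c(\mathbb{R})$ is $s_A(u,\alpha)=\sup\{u v: v\in A_\alpha\}$ for $u\in\mathbb{S}^0=\{-1,1\}$, $\alpha\in[0,1]$; thus $A_\alpha=[-s_A(-1,\alpha),s_A(1,\alpha)]$. A fuzzy random variable is a map $\mathcal{X}:\Omega\to\mathcal{F}_c(\mathbb{R})$ such that for each $\alpha\in[0,1]$ the map $\omega\mapsto\mathcal{X}(\omega)_\alpha$ is a random compact set (i.e. $\{\omega:\mathcal{X}(\omega)_\alpha\cap K\neq\emptyset\}\in\mathcal{A}$ for every non-empty compact convex $K$); then $s_{\mathcal{X}}(u,\alpha)(\omega)=s_{\mathcal{X}(\omega)}(u,\alpha)$ is a real random variable. For a real random variable $X$, $\mathrm{Med}(X)=[\underline{\mathrm{med}}(X),\overline{\mathrm{med}}(X)]$ denotes the (closed interval) set of all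 medians of $X$. A support median of $\mathcal{X}$ is any $A\in\mathcal{F}_c(\mathbb{R})$ with $s_A(u,\alpha)\in\mathrm{Med}(s_{\mathcal{X}}(u,\alpha))$ for all $u\in\{-1,1\}$, $\alpha\in[0,1]$; their set is $\mathrm{Med}_s(\mathcal{X})$. The Grzegorzewski median $\mathrm{med}_{Gr}(\mathcal{X})$ is the fuzzy number with membership function $\mathrm{med}_{Gr}(\mathcal{X})(t)=\sup\{\inf_{\omega\in\Omega}\mathcal{X}(\omega)(X(\omega)) : X:\Omega\to\mathbb{R}\text{ Borel measurable},\ t\in\mathrm{Med}(X)\}$; it is known that it is the unique fuzzy number with $(\mathrm{med}_{Gr}(\mathcal{X}))_\alpha=[\underline{\mathrm{med}}(\inf\mathcal{X}_\alpha),\overline{\mathrm{med}}(\sup\mathcal{X}_\alpha)]$ for every $\alpha\in[0,1]$, where $\inf\mathcal{X}_\alpha$ and $\sup\mathcal{X}_\alpha$ denote the real random variables $\omega\mapsto\inf\mathcal{X}(\omega)_\alpha$ and $\omega\mapsto\sup\mathcal{X}(\omega)_\alpha$. *)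

theory Defs
  imports "HOL-Probability.Probability"
begin

definition fuzzy_set :: "(real \<Rightarrow> real) \<Rightarrow> bool" where
  "fuzzy_set A \<longleftrightarrow> (\<forall>x. 0 \<le> A x \<and> A x \<le> 1)"

definition level :: "(real \<Rightarrow> real) \<Rightarrow> real \<Rightarrow> real set" where
  "level A \<alpha> = (if \<alpha> = 0 then closure {x. A x > 0} else {x. \<alpha> \<le> A x})"

definition Fc :: "(real \<Rightarrow> real) set" where
  "Fc = {A. fuzzy_set A \<and> (\<forall>\<alpha>\<in>{0..1}. \<exists>a b. a \<le> b \<and> level A \<alpha> = {a..b})}"

definition supp_fun :: "(real \<Rightarrow> real) \<Rightarrow> real \<Rightarrow> real \<Rightarrow> real" where
  "supp_fun A u \<alpha> = Sup ((\<lambda>v. u * v) ` level A \<alpha>)"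

text \<open>Fuzzy random variable: each alpha-level is a random compact set.\<close>
definition fuzzy_random_variable :: "'a measure \<Rightarrow> ('a \<Rightarrow> real \<Rightarrow> real) \<Rightarrow> bool" where
  "fuzzy_random_variable M X \<longleftrightarrow>
     (\<forall>\<omega>\<in>space M. X \<omega> \<in> Fc) \<and>
     (\<forall>\<alpha>\<in>{0..1}. \<forall>K::real set. K \<noteq> {} \<and> compact K \<and> convex K \<longrightarrow>
        {\<omega>\<in>space M. level (X \<omega>) \<alpha> \<inter> K \<noteq> {}} \<in> sets M)"

definition medians :: "'a measure \<Rightarrow> ('a \<Rightarrow> real) \<Rightarrow> real set" where
  "medians M Y = {m. measure M {\<omega>\<in>space M. Y \<omega> \<le> m} \<ge> 1/2 \<and>
                     measure M {\<omega>\<in>space M. m \<le> Y \<omega>} \<ge> 1/2}"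

definition support_medians :: "'a measure \<Rightarrow> ('a \<Rightarrow> real \<Rightarrow> real) \<Rightarrow> (real \<Rightarrow> real) set" where
  "support_medians M X = {A. A \<in> Fc \<and> (\<forall>u\<in>{-1, 1::real}. \<forall>\<alpha>\<in>{0..1}.
       supp_fun A u \<alpha> \<in> medians M (\<lambda>\<omega>. supp_fun (X \<omega>) u \<alpha>))}"

definition med_Gr :: "'a measure \<Rightarrow> ('a \<Rightarrow> real \<Rightarrow> real) \<Rightarrow> real \<Rightarrow> real" where
  "med_Gr M X t = (SUP Y \<in> {Y. Y \<in> borel_measurable M \<and> t \<in> medians M Y}.
                     (INF \<omega>\<in>space M. X \<omega> (Y \<omega>)))"

end

theory Submission
  imports Defs
begin

text \<open>
  Fix \<open>\<alpha> > 0\<close>, write \<open>[l \<omega>, r \<omega>]\<close> for the \<open>\<alpha>\<close>-level of \<open>\<X> \<omega>\<close>, and let \<open>A\<close> be a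
  support median, so \<open>A\<^sub>\<alpha> = [a, b]\<close> with \<open>a\<close> a median of \<open>l\<close> and \<open>b\<close> a median of \<open>r\<close>.
  For \<open>t \<in> [a, b]\<close> the random variable \<open>Y \<omega> = max (l \<omega>) (min (r \<omega>) t)\<close>, the point of
  \<open>[l \<omega>, r \<omega>]\<close> nearest to \<open>t\<close>, satisfies \<open>P(Y \<le> t) = P(l \<le> t) \<ge> P(l \<le> a) \<ge> 1/2\<close> and
  symmetrically \<open>P(t \<le> Y) \<ge> 1/2\<close>, so \<open>t\<close> is a median of \<open>Y\<close>; and \<open>Y\<close> always lies in the
  \<open>\<alpha>\<close>-level of \<open>\<X>\<close>. Hence \<open>Y\<close> witnesses \<open>med_Gr(\<X>)(t) \<ge> \<alpha>\<close>. The \<open>0\<close>-level follows by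
  taking closures of the strict supports.
\<close>

lemma Fc_level_eq_Icc:
  assumes "B \<in> Fc" "\<alpha> \<in> {0..1}"
  shows "level B \<alpha> = {Inf (level B \<alpha>) .. Sup (level B \<alpha>)}"
    and "Inf (level B \<alpha>) \<le> Sup (level B \<alpha>)"
proof -
  obtain a b where "a \<le> b" "level B \<alpha> = {a..b}"
    using assms unfolding Fc_def by blast
  then show "level B \<alpha> = {Inf (level B \<alpha>) .. Sup (level B \<alpha>)}"
    and "Inf (level B \<alpha>) \<le> Sup (level B \<alpha>)" by auto
qed

lemma supp_fun_one: "supp_fun B 1 \<alpha> = Sup (level B \<alpha>)"
  unfolding supp_fun_def by simp

lemma supp_fun_minus_one: "supp_fun B (-1) \<alpha> = - Inf (level B \<alpha>)"
  unfolding supp_fun_def Inf_real_def by simp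

lemma medians_uminus: "m \<in> medians M (\<lambda>\<omega>. - Y \<omega>) \<longleftrightarrow> - m \<in> medians M Y"
proof -
  have "{\<omega> \<in> space M. - Y \<omega> \<le> m} = {\<omega> \<in> space M. - m \<le> Y \<omega>}"
    and "{\<omega> \<in> space M. m \<le> - Y \<omega>} = {\<omega> \<in> space M. Y \<omega> \<le> - m}"
    by auto
  then show ?thesis unfolding medians_def by auto
qed

lemma borel_measurable_interval_bounds:
  fixes l r :: "'a \<Rightarrow> real"
  assumes bounds: "\<And>\<omega>. \<omega> \<in> space M \<Longrightarrow> S \<omega> = {l \<omega> .. r \<omega>} \<and> l \<omega> \<le> r \<omega>"
    and hits: "\<And>a b. a \<le> b \<Longrightarrow> {\<omega> \<in> space M. S \<omega> \<inter> {a..b} \<noteq> {}} \<in> sets M"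
  shows "l \<in> borel_measurable M" and "r \<in> borel_measurable M"
proof -
  have "{\<omega> \<in> space M. l \<omega> \<le> c} = (\<Union>n. {\<omega> \<in> space M. S \<omega> \<inter> {c - real n .. c} \<noteq> {}})"
    for c
  proof -
    have "l \<omega> \<le> c \<longleftrightarrow> (\<exists>n. S \<omega> \<inter> {c - real n .. c} \<noteq> {})" if "\<omega> \<in> space M" for \<omega>
    proof -
      obtain n :: nat where "c - l \<omega> \<le> n" using real_arch_simple by blast
      then show ?thesis using bounds[OF that] by (auto intro!: exI[of _ n])
    qed
    then show ?thesis by blast
  qed
  then show "l \<in> borel_measurable M"
    unfolding borel_measurable_iff_le using hits by (simp add: sets.countable_UN)
  have "{\<omega> \<in> space M. c \<le> r \<omega>} = (\<Union>n. {\<omega> \<in> space M. S \<omega> \<inter> {c .. c + real n} \<noteq> {}})"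
    for c
  proof -
    have "c \<le> r \<omega> \<longleftrightarrow> (\<exists>n. S \<omega> \<inter> {c .. c + real n} \<noteq> {})" if "\<omega> \<in> space M" for \<omega>
    proof -
      obtain n :: nat where "r \<omega> - c \<le> n" using real_arch_simple by blast
      then show ?thesis using bounds[OF that] by (auto intro!: exI[of _ n])
    qed
    then show ?thesis by blast
  qed
  then show "r \<in> borel_measurable M"
    unfolding borel_measurable_iff_ge using hits by (simp add: sets.countable_UN)
qed

lemma fuzzy_random_variable_level_bounds_measurable:
  assumes "fuzzy_random_variable M X" "\<alpha> \<in> {0..1}"
  shows "(\<lambda>\<omega>. Inf (level (X \<omega>) \<alpha>)) \<in> borel_measurable M"
    and "(\<lambda>\<omega>. Sup (level (X \<omega>) \<alpha>)) \<in> borel_measurable M"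
proof -
  have bounds: "level (X \<omega>) \<alpha> = {Inf (level (X \<omega>) \<alpha>) .. Sup (level (X \<omega>) \<alpha>)}
      \<and> Inf (level (X \<omega>) \<alpha>) \<le> Sup (level (X \<omega>) \<alpha>)" if "\<omega> \<in> space M" for \<omega>
    using assms(1) that Fc_level_eq_Icc[OF _ assms(2)]
    unfolding fuzzy_random_variable_def by blast
  have hits: "{\<omega> \<in> space M. level (X \<omega>) \<alpha> \<inter> {a..b} \<noteq> {}} \<in> sets M" if "a \<le> b" for a b
    using assms that unfolding fuzzy_random_variable_def by simp
  show "(\<lambda>\<omega>. Inf (level (X \<omega>) \<alpha>)) \<in> borel_measurable M"
    and "(\<lambda>\<omega>. Sup (level (X \<omega>) \<alpha>)) \<in> borel_measurable M"
    using borel_measurable_interval_bounds[OF bounds hits] by auto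
qed

lemma median_of_nearest_point:
  fixes l r :: "'a \<Rightarrow> real"
  assumes "prob_space M" "l \<in> borel_measurable M" "r \<in> borel_measurable M"
    and "\<And>\<omega>. \<omega> \<in> space M \<Longrightarrow> l \<omega> \<le> r \<omega>"
    and "a \<in> medians M l" "b \<in> medians M r" "a \<le> t" "t \<le> b"
  shows "t \<in> medians M (\<lambda>\<omega>. max (l \<omega>) (min (r \<omega>) t))"
proof -
  interpret prob_space M by fact
  have "1/2 \<le> measure M {\<omega> \<in> space M. l \<omega> \<le> a}"
    using assms(5) unfolding medians_def by blast
  also have "\<dots> \<le> measure M {\<omega> \<in> space M. l \<omega> \<le> t}"
    using assms(2,7) by (intro finite_measure_mono) (auto simp: borel_measurable_iff_le)
  also have "{\<omega> \<in> space M. l \<omega> \<le> t} = {\<omega> \<in> space M. max (l \<omega>) (min (r \<omega>) t) \<le> t}"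
    using assms(4) by auto
  finally have below: "1/2 \<le> measure M {\<omega> \<in> space M. max (l \<omega>) (min (r \<omega>) t) \<le> t}" .
  have "1/2 \<le> measure M {\<omega> \<in> space M. b \<le> r \<omega>}"
    using assms(6) unfolding medians_def by blast
  also have "\<dots> \<le> measure M {\<omega> \<in> space M. t \<le> r \<omega>}"
    using assms(3,8) by (intro finite_measure_mono) (auto simp: borel_measurable_iff_ge)
  also have "{\<omega> \<in> space M. t \<le> r \<omega>} = {\<omega> \<in> space M. t \<le> max (l \<omega>) (min (r \<omega>) t)}"
    using assms(4) by (auto simp: max_def min_def)
  finally show ?thesis
    using below unfolding medians_def by blast
qed

lemma med_Gr_lower_bound:
  assumes "space M \<noteq> {}" "\<And>\<omega>. \<omega> \<in> space M \<Longrightarrow> fuzzy_set (X \<omega>)"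
    and "Y \<in> borel_measurable M" "t \<in> medians M Y"
    and "\<And>\<omega>. \<omega> \<in> space M \<Longrightarrow> \<alpha> \<le> X \<omega> (Y \<omega>)"
  shows "\<alpha> \<le> med_Gr M X t"
proof -
  have bounds: "0 \<le> X \<omega> x" "X \<omega> x \<le> 1" if "\<omega> \<in> space M" for \<omega> x
    using assms(2)[OF that] unfolding fuzzy_set_def by auto
  have "(INF \<omega>\<in>space M. X \<omega> (Z \<omega>)) \<le> 1" for Z
  proof -
    obtain \<omega> where "\<omega> \<in> space M" using assms(1) by blast
    then show ?thesis
      using bounds by (intro cINF_lower2 bdd_belowI2[where m = 0]) auto
  qed
  then have "bdd_above ((\<lambda>Z. INF \<omega>\<in>space M. X \<omega> (Z \<omega>)) `
      {Z. Z \<in> borel_measurable M \<and> t \<in> medians M Z})"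
    by (intro bdd_aboveI2)
  moreover have "\<alpha> \<le> (INF \<omega>\<in>space M. X \<omega> (Y \<omega>))"
    using assms(1,5) by (rule cINF_greatest)
  ultimately show ?thesis
    unfolding med_Gr_def using assms(3,4) by (intro cSUP_upper2) auto
qed

lemma support_median_level_le_med_Gr:
  assumes "prob_space M" "fuzzy_random_variable M X" "A \<in> support_medians M X"
    and "0 < \<alpha>" "\<alpha> \<le> 1" "t \<in> level A \<alpha>"
  shows "\<alpha> \<le> med_Gr M X t"
proof -
  have \<alpha>: "\<alpha> \<in> {0..1}" using assms(4,5) by simp
  define l where "l \<omega> = Inf (level (X \<omega>) \<alpha>)" for \<omega>
  define r where "r \<omega> = Sup (level (X \<omega>) \<alpha>)" for \<omega>
  define Y where "Y \<omega> = max (l \<omega>) (min (r \<omega>) t)" for \<omega>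
  have XFc: "X \<omega> \<in> Fc" if "\<omega> \<in> space M" for \<omega>
    using assms(2) that unfolding fuzzy_random_variable_def by blast
  have level_X: "level (X \<omega>) \<alpha> = {l \<omega> .. r \<omega>}" "l \<omega> \<le> r \<omega>" if "\<omega> \<in> space M" for \<omega>
    using Fc_level_eq_Icc[OF XFc[OF that] \<alpha>] unfolding l_def r_def by auto
  have l: "l \<in> borel_measurable M" and r: "r \<in> borel_measurable M"
    using fuzzy_random_variable_level_bounds_measurable[OF assms(2) \<alpha>]
    unfolding l_def r_def by auto
  have AFc: "A \<in> Fc"
    and "supp_fun A (-1) \<alpha> \<in> medians M (\<lambda>\<omega>. supp_fun (X \<omega>) (-1) \<alpha>)"
    and "supp_fun A 1 \<alpha> \<in> medians M (\<lambda>\<omega>. supp_fun (X \<omega>) 1 \<alpha>)"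
    using assms(3) \<alpha> unfolding support_medians_def by auto
  then have "Inf (level A \<alpha>) \<in> medians M l" "Sup (level A \<alpha>) \<in> medians M r"
    unfolding supp_fun_minus_one supp_fun_one medians_uminus l_def r_def by simp_all
  moreover have "Inf (level A \<alpha>) \<le> t" "t \<le> Sup (level A \<alpha>)"
    using assms(6) Fc_level_eq_Icc(1)[OF AFc \<alpha>] by (metis atLeastAtMost_iff)+
  ultimately have "t \<in> medians M Y"
    unfolding Y_def using median_of_nearest_point[OF assms(1) l r] level_X(2) by blast
  moreover have "\<alpha> \<le> X \<omega> (Y \<omega>)" if "\<omega> \<in> space M" for \<omega>
  proof -
    have "Y \<omega> \<in> level (X \<omega>) \<alpha>" using level_X[OF that] unfolding Y_def by auto
    then show ?thesis using assms(4) unfolding level_def by auto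
  qed
  moreover have "Y \<in> borel_measurable M" unfolding Y_def using l r by measurable
  ultimately show ?thesis
    using med_Gr_lower_bound[of M X] prob_space.not_empty[OF assms(1)] XFc
    unfolding Fc_def by blast
qed

lemma level_subset_of_positive_levels:
  assumes "fuzzy_set A" "\<And>\<beta> t. 0 < \<beta> \<Longrightarrow> \<beta> \<le> 1 \<Longrightarrow> \<beta> \<le> A t \<Longrightarrow> \<beta> \<le> B t"
    and "\<alpha> \<in> {0..1}"
  shows "level A \<alpha> \<subseteq> level B \<alpha>"
proof (cases "\<alpha> = 0")
  case True
  have "{x. A x > 0} \<subseteq> {x. B x > 0}"
    using assms(1,2) unfolding fuzzy_set_def by (fastforce intro: order.strict_trans2)
  then show ?thesis using True unfolding level_def by (simp add: closure_mono)
next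
  case False
  then show ?thesis using assms(2,3) unfolding level_def by auto
qed

theorem proposition3p2:
  fixes M :: "'a measure" and X :: "'a \<Rightarrow> real \<Rightarrow> real"
    and A :: "real \<Rightarrow> real" and \<alpha> :: real
  assumes "prob_space M"
    and "fuzzy_random_variable M X"
    and "A \<in> support_medians M X"
    and "\<alpha> \<in> {0..1}"
  shows "level A \<alpha> \<subseteq> level (med_Gr M X) \<alpha>"
proof (rule level_subset_of_positive_levels[OF _ _ assms(4)])
  show "fuzzy_set A" using assms(3) unfolding support_medians_def Fc_def by blast
  show "\<beta> \<le> med_Gr M X t" if "0 < \<beta>" "\<beta> \<le> 1" "\<beta> \<le> A t" for \<beta> t
    using support_median_level_le_med_Gr[OF assms(1-3) that(1,2)] that unfolding level_def
    by simp
qed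

end
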